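(* Let $\alpha,\beta,\gamma\in\mathbb{R}$ with $\gamma\neq 0$, and let $G_2$ be the connected, simply connected Lie group whose Lie algebra $\mathfrak{g}_2$ has a basis $\{e_1,e_2,e_3\}$ with $[e_1,e_2]=\gamma e_2-\beta e_3$, $[e_1,e_3]=-\beta e_2-\gamma e_3$, $[e_2,e_3]=\alpha e_1$, equipped with the left-invariant Lorentzian metric $g$ for which $\{e_1,e_2,e_3\}$ is pseudo-orthonormal with $e_3$ timelike, and with the product structure $J$. Let $\lambda_0,c\in\mathbb{R}$. Then there exists a derivation $D$ of $\mathfrak{g}_2$ with $\widetilde{\mathrm{Ric}}^1=(s^1\lambda_0+c)\mathrm{Id}+D$ (i.e. $(G_2,g,J)$ is an algebraic Schouten soliton associated to the Kobayashi–Nomizu connection $\nabla^1$) if and only if $\alpha=\beta=0$ and $c=-\gamma^2+2\gamma^2\lambda_0$.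
   Context: Pseudo-orthonormal means $g(e_1,e_1)=g(e_2,e_2)=1$, $g(e_3,e_3)=-1$, $g(e_i,e_j)=0$ for $i\neq j$; left-invariant tensors are identified with their values on $\mathfrak{g}$. $\nabla$ is the Levi-Civita connection of $g$. The product structure $J$ is the left-invariant endomorphism with $Je_1=e_1$, $Je_2=e_2$, $Je_3=-e_3$. The canonical connection is $\nabla^0_XY=\nabla_XY-\frac12(\nabla_XJ)JY$, and the Kobayashi–Nomizu connection is $\nabla^1_XY=\nabla^0_XY-\frac14[(\nabla_YJ)JX-(\nabla_{JY}J)X]$. For $k=0,1$: $R^k(X,Y)Z=\nabla^k_X\nabla^k_YZ-\nabla^k_Y\nabla^k_XZ-\nabla^k_{[X,Y]}Z$; $\rho^k(X,Y)=-g(R^k(X,e_1)Y,e_1)-g(R^k(X,e_2)Y,e_2)+g(R^k(X,e_3)Y,e_3)$; $\widetilde\rho^k(X,Y)=\frac12(\rho^k(X,Y)+\rho^k(Y,X))$; $\widetilde{\mathrm{Ric}}^k$ is defined by $\widetilde\rho^k(X,Y)=g(\widetilde{\mathrm{Ric}}^k(X),Y)$; and $s^k=\widetilde\rho^k(e_1,e_1)+\widetilde\rho^k(e_2,e_2)-\widetilde\rho^k(e_3,e_3)$. A derivation of $\mathfrak{g}$ is a linear map $D$ with $D[X,Y]=[DX,Y]+[X,DY]$. $(G,g,J)$ is an algebraic Schouten soliton associated to $\nabla^k$ (with real constants $\lambda_0,c$) if $\widetilde{\mathrm{Ric}}^k=(s^k\lambda_0+c)\mathrm{Id}+D$ for some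 derivation $D$. *)

theory Defs
  imports "HOL-Analysis.Analysis"
begin

text \<open>The 3-dimensional Lie algebra is modelled as real^3; its standard basis
  e 1, e 2, e 3 is the pseudo-orthonormal basis of the paper. Left-invariant tensors
  are identified with their values on the Lie algebra.\<close>

definition e :: "3 \<Rightarrow> real^3" where
  "e i = axis i 1"

definition gm :: "real^3 \<Rightarrow> real^3 \<Rightarrow> real" where
  "gm x y = x$1 * y$1 + x$2 * y$2 - x$3 * y$3"

text \<open>Bracket of the Lie algebra g_2 (bilinear extension of the structure equations
  [e1,e2] = gamma e2 - beta e3, [e1,e3] = - beta e2 - gamma e3, [e2,e3] = alpha e1).\<close>
definition br2 :: "real \<Rightarrow> real \<Rightarrow> real \<Rightarrow> real^3 \<Rightarrow> real^3 \<Rightarrow> real^3" where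
  "br2 \<alpha> \<beta> \<gamma> x y =
     (let p12 = x$1 * y$2 - x$2 * y$1;
          p13 = x$1 * y$3 - x$3 * y$1;
          p23 = x$2 * y$3 - x$3 * y$2
      in p12 *\<^sub>R (\<gamma> *\<^sub>R e 2 - \<beta> *\<^sub>R e 3)
       + p13 *\<^sub>R ((- \<beta>) *\<^sub>R e 2 - \<gamma> *\<^sub>R e 3)
       + p23 *\<^sub>R (\<alpha> *\<^sub>R e 1))"

text \<open>Levi-Civita connection of the left-invariant metric via the Koszul formula
  2 g(nabla_X Y, Z) = g([X,Y],Z) - g([Y,Z],X) + g([Z,X],Y), expanded in the
  pseudo-orthonormal basis.\<close>
definition LC :: "(real^3 \<Rightarrow> real^3 \<Rightarrow> real^3) \<Rightarrow> real^3 \<Rightarrow> real^3 \<Rightarrow> real^3" where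
  "LC br X Y = (\<Sum>i\<in>{1,2,3}. (gm (e i) (e i) *
      ((gm (br X Y) (e i) - gm (br Y (e i)) X + gm (br (e i) X) Y) / 2)) *\<^sub>R e i)"

definition Jp :: "real^3 \<Rightarrow> real^3" where
  "Jp x = (\<chi> i. if i = 3 then - (x$i) else x$i)"

definition nablaJ :: "(real^3 \<Rightarrow> real^3 \<Rightarrow> real^3) \<Rightarrow> real^3 \<Rightarrow> real^3 \<Rightarrow> real^3" where
  "nablaJ br X Y = LC br X (Jp Y) - Jp (LC br X Y)"

definition nabla0 :: "(real^3 \<Rightarrow> real^3 \<Rightarrow> real^3) \<Rightarrow> real^3 \<Rightarrow> real^3 \<Rightarrow> real^3" where
  "nabla0 br X Y = LC br X Y - (1/2) *\<^sub>R nablaJ br X (Jp Y)"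

definition nabla1 :: "(real^3 \<Rightarrow> real^3 \<Rightarrow> real^3) \<Rightarrow> real^3 \<Rightarrow> real^3 \<Rightarrow> real^3" where
  "nabla1 br X Y = nabla0 br X Y
      - (1/4) *\<^sub>R (nablaJ br Y (Jp X) - nablaJ br (Jp Y) X)"

definition curv :: "(real^3 \<Rightarrow> real^3 \<Rightarrow> real^3) \<Rightarrow> (real^3 \<Rightarrow> real^3 \<Rightarrow> real^3)
    \<Rightarrow> real^3 \<Rightarrow> real^3 \<Rightarrow> real^3 \<Rightarrow> real^3" where
  "curv br con X Y Z = con X (con Y Z) - con Y (con X Z) - con (br X Y) Z"

definition ricci :: "(real^3 \<Rightarrow> real^3 \<Rightarrow> real^3) \<Rightarrow> (real^3 \<Rightarrow> real^3 \<Rightarrow> real^3)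
    \<Rightarrow> real^3 \<Rightarrow> real^3 \<Rightarrow> real" where
  "ricci br con X Y = - gm (curv br con X (e 1) Y) (e 1) - gm (curv br con X (e 2) Y) (e 2)
      + gm (curv br con X (e 3) Y) (e 3)"

definition sym_ricci :: "(real^3 \<Rightarrow> real^3 \<Rightarrow> real^3) \<Rightarrow> (real^3 \<Rightarrow> real^3 \<Rightarrow> real^3)
    \<Rightarrow> real^3 \<Rightarrow> real^3 \<Rightarrow> real" where
  "sym_ricci br con X Y = (ricci br con X Y + ricci br con Y X) / 2"

text \<open>The Ricci operator: the unique endomorphism with sym_ricci X Y = g(Ric X, Y).\<close>
definition ricci_op :: "(real^3 \<Rightarrow> real^3 \<Rightarrow> real^3) \<Rightarrow> (real^3 \<Rightarrow> real^3 \<Rightarrow> real^3)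
    \<Rightarrow> real^3 \<Rightarrow> real^3" where
  "ricci_op br con X = (\<Sum>i\<in>{1,2,3}. (gm (e i) (e i) * sym_ricci br con X (e i)) *\<^sub>R e i)"

definition scal :: "(real^3 \<Rightarrow> real^3 \<Rightarrow> real^3) \<Rightarrow> (real^3 \<Rightarrow> real^3 \<Rightarrow> real^3) \<Rightarrow> real" where
  "scal br con = sym_ricci br con (e 1) (e 1) + sym_ricci br con (e 2) (e 2)
      - sym_ricci br con (e 3) (e 3)"

definition derivation :: "(real^3 \<Rightarrow> real^3 \<Rightarrow> real^3) \<Rightarrow> (real^3 \<Rightarrow> real^3) \<Rightarrow> bool" where
  "derivation br D \<longleftrightarrow> linear D \<and> (\<forall>X Y. D (br X Y) = br (D X) Y + br X (D Y))"

definition alg_schouten_soliton :: "(real^3 \<Rightarrow> real^3 \<Rightarrow> real^3)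
    \<Rightarrow> (real^3 \<Rightarrow> real^3 \<Rightarrow> real^3) \<Rightarrow> real \<Rightarrow> real \<Rightarrow> bool" where
  "alg_schouten_soliton br con lam0 c \<longleftrightarrow>
     (\<exists>D. derivation br D \<and>
        (\<forall>X. ricci_op br con X = (scal br con * lam0 + c) *\<^sub>R X + D X))"

end

theory Submission
  imports Defs
begin

(* Since the soliton equation is algebraic, the only candidate for D is
   Ric^1 - (s^1 lam0 + c) Id, and the question is whether this map is a derivation.
   In the basis e_i the Kobayashi-Nomizu connection has a short closed form, giving
   Ric^1 = [[-(g^2+b^2), 0, 0], [0, -(g^2+ab), -ag/2], [0, ag/2, 0]] and
   s^1 = -2g^2 - b^2 - ab  (a, b, g for alpha, beta, gamma). For Ric^1 - k Id to be a
   derivation, its Leibniz identity on [e_1,e_2] forces k = -g^2 - b^2 - ab (as g <> 0);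
   the identity on [e_2,e_3] then gives a (2b^2 + g^2) = 0, so a = 0, and the
   e_3-component on [e_1,e_2] gives b = 0. Conversely, for a = b = 0 and k = -g^2 the
   map is diag(0, 0, g^2), which is a derivation. *)

lemma alg_schouten_soliton_iff_derivation:
  "alg_schouten_soliton br con lam0 c \<longleftrightarrow>
     derivation br (\<lambda>X. ricci_op br con X - (scal br con * lam0 + c) *\<^sub>R X)"
  (is "_ \<longleftrightarrow> derivation br ?D")
proof
  assume "alg_schouten_soliton br con lam0 c"
  then obtain D where "derivation br D"
    and "\<forall>X. ricci_op br con X = (scal br con * lam0 + c) *\<^sub>R X + D X"
    unfolding alg_schouten_soliton_def by blast
  then have "?D = D"
    by (simp add: fun_eq_iff)
  with \<open>derivation br D\<close> show "derivation br ?D"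
    by simp
qed (auto simp: alg_schouten_soliton_def)

lemma e_nth [simp]: "e i $ j = (if i = j then 1 else 0)"
  by (simp add: e_def axis_def)

lemma sum_3: "(\<Sum>i\<in>{1,2,3::3}. f i) = f 1 + f 2 + f 3"
  by (simp add: add.assoc)

lemma vector_3_eqI: "(x::real^3) $ 1 = a \<Longrightarrow> x $ 2 = b \<Longrightarrow> x $ 3 = c \<Longrightarrow> x = vector [a,b,c]"
  by (simp add: vec_eq_iff forall_3)

lemma br2_vector:
  "br2 a b g x y = vector [a*(x$2*y$3 - x$3*y$2),
     g*(x$1*y$2 - x$2*y$1) - b*(x$1*y$3 - x$3*y$1),
     -b*(x$1*y$2 - x$2*y$1) - g*(x$1*y$3 - x$3*y$1)]"
  by (rule vector_3_eqI) (simp_all add: br2_def Let_def algebra_simps)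

lemma gm_vector [simp]:
  "gm (vector [a1,a2,a3]) y = a1*y$1 + a2*y$2 - a3*y$3"
  "gm x (vector [a1,a2,a3]) = x$1*a1 + x$2*a2 - x$3*a3"
  by (simp_all add: gm_def)

lemma gm_e [simp]:
  "gm (e 1) y = y$1" "gm (e 2) y = y$2" "gm (e 3) y = - y$3"
  "gm y (e 1) = y$1" "gm y (e 2) = y$2" "gm y (e 3) = - y$3"
  by (simp_all add: gm_def)

lemma Jp_vector: "Jp X = vector [X$1, X$2, - X$3]"
  by (rule vector_3_eqI) (simp_all add: Jp_def)

lemma LC_br2:
  "LC (br2 a b g) X Y = vector [g*X$3*Y$3 + g*X$2*Y$2 - a/2*X$3*Y$2 + a/2*X$2*Y$3,
      - g*X$2*Y$1 - b*X$1*Y$3 + a/2*X$3*Y$1 + a/2*X$1*Y$3,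
      g*X$3*Y$1 - b*X$1*Y$2 + a/2*X$2*Y$1 + a/2*X$1*Y$2]"
  by (rule vector_3_eqI) (simp_all add: LC_def sum_3 br2_vector field_simps)

lemma nabla1_br2:
  "nabla1 (br2 a b g) X Y = vector [g*X$2*Y$2 - a*X$3*Y$2, - g*X$2*Y$1 + b*X$3*Y$1, - g*X$1*Y$3]"
  by (rule vector_3_eqI)
    (simp_all add: nabla1_def nabla0_def nablaJ_def LC_br2 Jp_vector field_simps)

lemma ricci_op_nabla1_br2:
  "ricci_op (br2 a b g) (nabla1 (br2 a b g)) X =
     vector [-(g^2+b^2)*X$1, -(g^2+a*b)*X$2 - a*g/2*X$3, a*g/2*X$2]"
  by (rule vector_3_eqI)
    (simp_all add: ricci_op_def sum_3 sym_ricci_def ricci_def curv_def nabla1_br2 br2_vector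
      field_simps power2_eq_square)

lemma scal_nabla1_br2: "scal (br2 a b g) (nabla1 (br2 a b g)) = -2*g^2 - b^2 - a*b"
  by (simp add: scal_def sym_ricci_def ricci_def curv_def nabla1_br2 br2_vector
      field_simps power2_eq_square)

lemma derivation_br2_shifted_ricci_imp:
  fixes a b g k :: real
  assumes "g \<noteq> 0"
    and "derivation (br2 a b g) (\<lambda>X. ricci_op (br2 a b g) (nabla1 (br2 a b g)) X - k *\<^sub>R X)"
      (is "derivation ?br ?D")
  shows "a = 0 \<and> b = 0 \<and> k = - (g^2)"
proof -
  have leibniz: "?D (?br (e i) (e j)) $ l = (?br (?D (e i)) (e j) + ?br (e i) (?D (e j))) $ l"
    for i j l
    using assms(2) by (simp add: derivation_def)
  have on_e12_2: "g * (-(g^2 + b^2) - k) = g * (a*b)"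
    using leibniz[of 1 2 2]
    by (simp add: ricci_op_nabla1_br2 br2_vector algebra_simps power2_eq_square)
  have on_e23_1: "a * (- (b^2) + a*b + k) = 0"
    using leibniz[of 2 3 1]
    by (simp add: ricci_op_nabla1_br2 br2_vector algebra_simps power2_eq_square)
  have on_e12_3: "a*g^2 = b*(2*g^2 + b^2 + a*b + k)"
    using leibniz[of 1 2 3]
    by (simp add: ricci_op_nabla1_br2 br2_vector algebra_simps power2_eq_square)
  have k: "k = - (g^2) - b^2 - a*b"
    using on_e12_2 assms(1) by simp
  have "a * (2*b^2 + g^2) = 0"
    using on_e23_1 k by (simp add: algebra_simps)
  moreover have "2*b^2 + g^2 > 0"
    using assms(1) by (simp add: add_nonneg_pos)
  ultimately have a: "a = 0"
    by simp
  have b: "b = 0"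
    using on_e12_3 k a assms(1) by (simp add: algebra_simps power2_eq_square)
  show ?thesis
    using a b k by simp
qed

lemma derivation_br2_0_0_diag:
  "derivation (br2 0 0 g) (\<lambda>X. vector [0, 0, g^2 * X$3])"
proof -
  have "linear (\<lambda>X::real^3. vector [0, 0, g^2 * X$3] :: real^3)"
    by (rule linearI) (simp_all add: vec_eq_iff forall_3 algebra_simps)
  then show ?thesis
    by (simp add: derivation_def br2_vector vec_eq_iff forall_3 algebra_simps power2_eq_square)
qed

lemma derivation_br2_shifted_ricci_iff:
  fixes a b g k :: real
  assumes "g \<noteq> 0"
  shows "derivation (br2 a b g) (\<lambda>X. ricci_op (br2 a b g) (nabla1 (br2 a b g)) X - k *\<^sub>R X)
    \<longleftrightarrow> a = 0 \<and> b = 0 \<and> k = - (g^2)"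
  (is "derivation ?br ?D \<longleftrightarrow> _")
proof
  assume "a = 0 \<and> b = 0 \<and> k = - (g^2)"
  moreover have "(\<lambda>X. ricci_op (br2 0 0 g) (nabla1 (br2 0 0 g)) X + g^2 *\<^sub>R X) =
      (\<lambda>X. vector [0, 0, g^2 * X$3])"
    by (simp add: fun_eq_iff ricci_op_nabla1_br2 vec_eq_iff forall_3)
  ultimately show "derivation ?br ?D"
    using derivation_br2_0_0_diag by simp
qed (use assms derivation_br2_shifted_ricci_imp in blast)

theorem theorem4p5:
  fixes \<alpha> \<beta> \<gamma> lam0 c :: real
  assumes "\<gamma> \<noteq> 0"
  shows "alg_schouten_soliton (br2 \<alpha> \<beta> \<gamma>) (nabla1 (br2 \<alpha> \<beta> \<gamma>)) lam0 c \<longleftrightarrow>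
         (\<alpha> = 0 \<and> \<beta> = 0 \<and> c = - \<gamma>\<^sup>2 + 2 * \<gamma>\<^sup>2 * lam0)"
proof -
  have "alg_schouten_soliton (br2 \<alpha> \<beta> \<gamma>) (nabla1 (br2 \<alpha> \<beta> \<gamma>)) lam0 c \<longleftrightarrow>
      \<alpha> = 0 \<and> \<beta> = 0 \<and> (-2*\<gamma>^2 - \<beta>^2 - \<alpha>*\<beta>) * lam0 + c = - (\<gamma>^2)"
    unfolding alg_schouten_soliton_iff_derivation scal_nabla1_br2
    using derivation_br2_shifted_ricci_iff[OF assms] by blast
  also have "\<dots> \<longleftrightarrow> \<alpha> = 0 \<and> \<beta> = 0 \<and> c = - \<gamma>\<^sup>2 + 2 * \<gamma>\<^sup>2 * lam0"
    by auto
  finally show ?thesis .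
qed

end
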